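(* There exist constants $0<M_1\le M_2<\infty$ such that \[M_1\le\inf_{b\in\Sigma(C,A,\gamma)}\ \inf_{x\in[y_1,\bar y]}\xi_b(x)\le\sup_{b\in\Sigma(C,A,\gamma)}\ \sup_{x\in[y_1,\bar y]}\xi_b(x)\le M_2.\]
   Context: Let $\sigma:\mathbb{R}\to\mathbb{R}$ be locally Lipschitz with $\underline\nu\le|\sigma(x)|\le\overline\nu$ for all $x$, for constants $0<\underline\nu\le\overline\nu<\infty$. For constants $A,\gamma>0$, $C\ge1$, let $\Sigma(C,A,\gamma)=\Sigma(C,A,\gamma,\sigma)$ be the set of locally Lipschitz $b:\mathbb{R}\to\mathbb{R}$ with $|b(x)|\le C(1+|x|)$ for all $x$ and $\frac{b(x)}{\sigma^2(x)}\operatorname{sgn}(x)\le-\gamma$ for all $|x|>A$. For $b$ in this class, $\rho_b(x)=\frac{1}{C_{b,\sigma}\sigma^2(x)}\exp\big(\int_0^x\frac{2b(y)}{\sigma^2(y)}\mathrm{d}y\big)$ is the invariant density ($C_{b,\sigma}$ normalizing). Fix $y_0\in\mathbb{R}$ and set $\xi_b(x):=2\int_{y_0}^x\frac{1}{\sigma^2(y)\rho_b(y)}\int_{-\infty}^y\rho_b(z)\,\mathrm{d}z\,\mathrm{d}y$. Here $y_0<y_1<\bar y$ are fixed real numbers. *)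

theory Defs
  imports "HOL-Analysis.Analysis"
begin

definition loc_lipschitz :: "(real \<Rightarrow> real) \<Rightarrow> bool" where
  "loc_lipschitz f \<longleftrightarrow> (\<forall>x. \<exists>e>0. \<exists>L. L-lipschitz_on (cball x e) f)"

definition Sigma_class :: "real \<Rightarrow> real \<Rightarrow> real \<Rightarrow> (real \<Rightarrow> real) \<Rightarrow> (real \<Rightarrow> real) set" where
  "Sigma_class C A \<gamma> \<sigma> = {b. loc_lipschitz b \<and> (\<forall>x. \<bar>b x\<bar> \<le> C * (1 + \<bar>x\<bar>)) \<and>
       (\<forall>x. \<bar>x\<bar> > A \<longrightarrow> b x / (\<sigma> x)\<^sup>2 * sgn x \<le> - \<gamma>)}"

definition dens_un :: "(real \<Rightarrow> real) \<Rightarrow> (real \<Rightarrow> real) \<Rightarrow> real \<Rightarrow> real" where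
  "dens_un b \<sigma> x = (1 / (\<sigma> x)\<^sup>2) * exp (LBINT y=ereal 0..ereal x. 2 * b y / (\<sigma> y)\<^sup>2)"

definition norm_const :: "(real \<Rightarrow> real) \<Rightarrow> (real \<Rightarrow> real) \<Rightarrow> real" where
  "norm_const b \<sigma> = (LBINT x. dens_un b \<sigma> x)"

definition rho :: "(real \<Rightarrow> real) \<Rightarrow> (real \<Rightarrow> real) \<Rightarrow> real \<Rightarrow> real" where
  "rho b \<sigma> x = dens_un b \<sigma> x / norm_const b \<sigma>"

definition xi :: "(real \<Rightarrow> real) \<Rightarrow> (real \<Rightarrow> real) \<Rightarrow> real \<Rightarrow> real \<Rightarrow> real" where
  "xi b \<sigma> y0 x = 2 * (LBINT y=ereal y0..ereal x.
      (1 / ((\<sigma> y)\<^sup>2 * rho b \<sigma> y)) * (LBINT z=-\<infinity>..ereal y. rho b \<sigma> z))"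

end

theory Submission
  imports Defs
begin

text \<open>
  With the potential Q(x) = int_0^x 2b/sigma^2 one has rho_b proportional to exp Q / sigma^2, and
  the normalising constant cancels in xi_b, whose integrand becomes
  exp (-Q y) * int_{-inf}^y exp Q / sigma^2. On a window [-R, R] the linear growth bound on b
  gives |Q| <= L R, and outside it the inward drift makes Q decrease at rate 2 gamma, so
  exp Q / sigma^2 is dominated by a multiple of exp (-2 gamma |z|). All these constants depend
  only on the class parameters, hence the integrand of xi_b is pinched between two positive
  constants uniformly in b, and xi_b(x) lies between two multiples of x - y0.
\<close>

definition drift_potential :: "(real \<Rightarrow> real) \<Rightarrow> (real \<Rightarrow> real) \<Rightarrow> real \<Rightarrow> real" where
  "drift_potential b \<sigma> x = (LBINT y=ereal 0..ereal x. 2 * b y / (\<sigma> y)\<^sup>2)"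

definition dens_un_cdf :: "(real \<Rightarrow> real) \<Rightarrow> (real \<Rightarrow> real) \<Rightarrow> real \<Rightarrow> real" where
  "dens_un_cdf b \<sigma> y = (LINT z:{..<y}|lborel. dens_un b \<sigma> z)"

lemma dens_un_eq_exp_drift_potential: "dens_un b \<sigma> x = exp (drift_potential b \<sigma> x) / (\<sigma> x)\<^sup>2"
  by (simp add: dens_un_def drift_potential_def)

lemma dens_un_nonneg: "0 \<le> dens_un b \<sigma> x"
  by (simp add: dens_un_def)

lemma loc_lipschitz_imp_continuous_on:
  assumes "loc_lipschitz f"
  shows "continuous_on S f"
proof -
  have "isCont f x" for x
  proof -
    obtain e L where "e > 0" and lip: "L-lipschitz_on (cball x e) f"
      using assms unfolding loc_lipschitz_def by blast
    have "continuous_on (ball x e) f"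
      using lipschitz_on_continuous_on[OF lip] ball_subset_cball continuous_on_subset by blast
    then show ?thesis
      using \<open>e > 0\<close> by (metis centre_in_ball continuous_on_interior interior_ball)
  qed
  then show ?thesis by (simp add: continuous_at_imp_continuous_on)
qed

lemma interval_integral_has_real_derivative:
  fixes f :: "real \<Rightarrow> real"
  assumes "continuous_on UNIV f"
  shows "((\<lambda>u. LBINT y=ereal a..ereal u. f y) has_real_derivative f x) (at x)"
proof -
  let ?I = "{-\<bar>a\<bar>-\<bar>x\<bar>-1..\<bar>a\<bar>+\<bar>x\<bar>+1}"
  have "((\<lambda>u. LBINT y=ereal a..ereal u. f y) has_vector_derivative f x) (at x within ?I)"
    using assms by (intro interval_integral_FTC2) (auto intro: continuous_on_subset)
  moreover have "at x within ?I = at x"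
    by (rule at_within_Icc_at) auto
  ultimately show ?thesis
    by (simp add: has_real_derivative_iff_has_vector_derivative)
qed

lemma DERIV_upper_bound_diff:
  fixes Q f :: "real \<Rightarrow> real"
  assumes "\<And>t. (Q has_real_derivative f t) (at t)" and "a \<le> b"
    and "\<And>t. a \<le> t \<Longrightarrow> t \<le> b \<Longrightarrow> f t \<le> M"
  shows "Q b - Q a \<le> M * (b - a)"
proof -
  have "Q b - M * b \<le> Q a - M * a"
    using DERIV_nonpos_imp_nonincreasing[OF \<open>a \<le> b\<close>, of "\<lambda>t. Q t - M * t"] assms
    by (fastforce intro!: derivative_eq_intros)
  then show ?thesis by (simp add: algebra_simps)
qed

lemma DERIV_lower_bound_diff:
  fixes Q f :: "real \<Rightarrow> real"
  assumes "\<And>t. (Q has_real_derivative f t) (at t)" and "a \<le> b"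
    and "\<And>t. a \<le> t \<Longrightarrow> t \<le> b \<Longrightarrow> M \<le> f t"
  shows "M * (b - a) \<le> Q b - Q a"
proof -
  have "- Q b - - Q a \<le> - M * (b - a)"
    by (rule DERIV_upper_bound_diff[of _ "\<lambda>t. - f t"]) (use assms in \<open>auto intro: DERIV_minus\<close>)
  then show ?thesis by simp
qed

lemma antiderivative_abs_le:
  fixes Q f :: "real \<Rightarrow> real"
  assumes deriv: "\<And>t. (Q has_real_derivative f t) (at t)" and "Q 0 = 0"
    and bound: "\<And>t. \<bar>t\<bar> \<le> R \<Longrightarrow> \<bar>f t\<bar> \<le> L" and "\<bar>z\<bar> \<le> R"
  shows "\<bar>Q z\<bar> \<le> L * \<bar>z\<bar>"
proof -
  have bound': "- L \<le> f t \<and> f t \<le> L" if "min 0 z \<le> t" "t \<le> max 0 z" for t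
  proof -
    have "\<bar>t\<bar> \<le> R" using that \<open>\<bar>z\<bar> \<le> R\<close> by linarith
    then show ?thesis using bound[of t] by linarith
  qed
  have "Q (max 0 z) - Q (min 0 z) \<le> L * (max 0 z - min 0 z)"
    by (rule DERIV_upper_bound_diff[OF deriv]) (use bound' in auto)
  moreover have "- L * (max 0 z - min 0 z) \<le> Q (max 0 z) - Q (min 0 z)"
    by (rule DERIV_lower_bound_diff[OF deriv]) (use bound' in auto)
  ultimately show ?thesis
    using \<open>Q 0 = 0\<close> by (cases "0 \<le> z") (auto simp: abs_le_iff)
qed

lemma antiderivative_linear_decay:
  fixes Q f :: "real \<Rightarrow> real"
  assumes deriv: "\<And>t. (Q has_real_derivative f t) (at t)" and "Q 0 = 0"
    and bound: "\<And>t. \<bar>t\<bar> \<le> R \<Longrightarrow> \<bar>f t\<bar> \<le> L"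
    and right: "\<And>t. R \<le> t \<Longrightarrow> f t \<le> - c" and left: "\<And>t. t \<le> - R \<Longrightarrow> c \<le> f t"
    and "0 \<le> R" and "0 \<le> c"
  shows "Q z \<le> (L + c) * R - c * \<bar>z\<bar>"
proof -
  have Q_inner: "Q t \<le> L * R" if "\<bar>t\<bar> \<le> R" for t
  proof -
    have "0 \<le> L" using bound[of 0] \<open>0 \<le> R\<close> by simp
    then have "L * \<bar>t\<bar> \<le> L * R" using that by (simp add: mult_left_mono)
    then show ?thesis using antiderivative_abs_le[OF deriv \<open>Q 0 = 0\<close> bound that] by linarith
  qed
  consider "\<bar>z\<bar> \<le> R" | "R < z" | "z < - R" by linarith
  then show ?thesis
  proof cases
    case 1
    then have "c * \<bar>z\<bar> \<le> c * R" using \<open>0 \<le> c\<close> by (simp add: mult_left_mono)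
    then show ?thesis using Q_inner[OF 1] by (simp add: algebra_simps)
  next
    case 2
    have "Q z - Q R \<le> - c * (z - R)"
      by (rule DERIV_upper_bound_diff[OF deriv]) (use right 2 in auto)
    then show ?thesis using Q_inner[of R] 2 \<open>0 \<le> R\<close> by (simp add: algebra_simps)
  next
    case 3
    have "c * (- R - z) \<le> Q (- R) - Q z"
      by (rule DERIV_lower_bound_diff[OF deriv]) (use left 3 in auto)
    then show ?thesis using Q_inner[of "- R"] 3 \<open>0 \<le> R\<close> by (simp add: algebra_simps)
  qed
qed

lemma integrable_exp_neg_abs:
  fixes c :: real
  assumes "0 < c"
  shows "integrable lborel (\<lambda>x. exp (- c * \<bar>x\<bar>))"
proof -
  have "(\<lambda>x. exp (- c * x)) absolutely_integrable_on {0..}"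
    by (rule nonnegative_absolutely_integrable_1[OF integrable_on_exp_minus_to_infinity[OF assms]]) auto
  then have right: "integrable lborel (\<lambda>x. indicator {0..} x *\<^sub>R exp (- c * x))"
    using integrable_completion[of "\<lambda>x::real. indicator {0..} x *\<^sub>R exp (- c * x)" lborel]
    by (simp add: set_integrable_def)
  have left: "integrable lborel (\<lambda>x. indicator {0..} (- x) *\<^sub>R exp (- c * (- x)))"
    using lborel_integrable_real_affine[OF right, of "-1" 0] by simp
  show ?thesis
    by (rule Bochner_Integration.integrable_bound[OF Bochner_Integration.integrable_add[OF right left]])
      (auto simp: indicator_def)
qed

lemma set_integral_mono_set_nonneg:
  fixes g :: "real \<Rightarrow> real"
  assumes "integrable lborel g" "\<And>x. 0 \<le> g x" "S \<subseteq> T" "S \<in> sets lborel" "T \<in> sets lborel"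
  shows "(LINT x:S|lborel. g x) \<le> (LINT x:T|lborel. g x)"
  unfolding set_lebesgue_integral_def
proof (rule integral_mono)
  show "integrable lborel (\<lambda>x. indicator S x *\<^sub>R g x)"
    using integrable_mult_indicator[OF assms(4,1)] by simp
  show "integrable lborel (\<lambda>x. indicator T x *\<^sub>R g x)"
    using integrable_mult_indicator[OF assms(5,1)] by simp
  show "indicator S x *\<^sub>R g x \<le> indicator T x *\<^sub>R g x" for x
    using assms(2)[of x] assms(3) by (auto simp: indicator_def)
qed

lemma set_integral_ge_const_mult_measure:
  fixes g :: "real \<Rightarrow> real"
  assumes "integrable lborel g" "\<And>x. x \<in> T \<Longrightarrow> c \<le> g x"
    "T \<in> sets lborel" "emeasure lborel T < \<infinity>"
  shows "c * measure lborel T \<le> (LINT x:T|lborel. g x)"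
proof -
  have "c * measure lborel T = (LINT x|lborel. indicator T x * c)"
    using assms(3,4) by (simp add: mult.commute)
  also have "\<dots> \<le> (LINT x|lborel. indicator T x * g x)"
  proof (rule integral_mono)
    show "integrable lborel (\<lambda>x. indicator T x * c)"
      using assms(3,4) by (simp add: less_top)
    show "integrable lborel (\<lambda>x. indicator T x * g x)"
      using integrable_mult_indicator[OF assms(3,1)] by simp
    show "indicator T x * c \<le> indicator T x * g x" for x
      using assms(2)[of x] by (auto simp: indicator_def)
  qed
  finally show ?thesis by (simp add: set_lebesgue_integral_def)
qed

lemma set_integral_Icc_bounds:
  fixes g :: "real \<Rightarrow> real"
  assumes "g \<in> borel_measurable lborel" "a \<le> b" "\<And>y. a \<le> y \<Longrightarrow> y \<le> b \<Longrightarrow> m \<le> g y \<and> g y \<le> K"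
  shows "(b - a) * m \<le> (LINT y:{a..b}|lborel. g y) \<and> (LINT y:{a..b}|lborel. g y) \<le> (b - a) * K"
proof -
  have const_integrable: "set_integrable lborel {a..b} (\<lambda>_. k)" for k :: real
    unfolding set_integrable_def
    by (rule integrableI_bounded_set_indicator[where B="\<bar>k\<bar>"]) (auto simp: emeasure_lborel_Icc_eq)
  have g_bound: "\<bar>g y\<bar> \<le> \<bar>m\<bar> + \<bar>K\<bar>" if "y \<in> {a..b}" for y
    using assms(3)[of y] that by auto
  have g_integrable: "set_integrable lborel {a..b} g"
    unfolding set_integrable_def
    by (rule integrableI_bounded_set_indicator[where B="\<bar>m\<bar> + \<bar>K\<bar>"])
      (use assms(1) g_bound in \<open>auto simp: emeasure_lborel_Icc_eq\<close>)
  have const_integral: "(LINT y:{a..b}|lborel. k) = (b - a) * k" for k :: real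
    using \<open>a \<le> b\<close> by (simp add: set_integral_const emeasure_lborel_Icc_eq)
  have "(LINT y:{a..b}|lborel. m) \<le> (LINT y:{a..b}|lborel. g y)"
    by (rule set_integral_mono[OF const_integrable g_integrable]) (use assms(3) in auto)
  moreover have "(LINT y:{a..b}|lborel. g y) \<le> (LINT y:{a..b}|lborel. K)"
    by (rule set_integral_mono[OF g_integrable const_integrable]) (use assms(3) in auto)
  ultimately show ?thesis by (simp only: const_integral)
qed

lemma xi_eq_weighted_dens_un_cdf:
  assumes "norm_const b \<sigma> \<noteq> 0" "\<And>y. \<sigma> y \<noteq> 0" "y0 \<le> x"
  shows "xi b \<sigma> y0 x = 2 * (LINT y:{y0..x}|lborel. exp (- drift_potential b \<sigma> y) * dens_un_cdf b \<sigma> y)"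
proof -
  have "(1 / ((\<sigma> y)\<^sup>2 * rho b \<sigma> y)) * (LBINT z=-\<infinity>..ereal y. rho b \<sigma> z)
      = exp (- drift_potential b \<sigma> y) * dens_un_cdf b \<sigma> y" for y
  proof -
    have "(LBINT z=-\<infinity>..ereal y. rho b \<sigma> z) = dens_un_cdf b \<sigma> y / norm_const b \<sigma>"
      by (simp add: rho_def dens_un_cdf_def interval_lebesgue_integral_le_eq)
    then show ?thesis
      using assms(1) assms(2)[of y] unfolding rho_def dens_un_eq_exp_drift_potential
      by (simp add: exp_minus field_simps)
  qed
  then show ?thesis
    unfolding xi_def using \<open>y0 \<le> x\<close> by (simp add: interval_integral_Icc)
qed

text \<open>None of the constants defined in this locale depends on the drift b.\<close>

locale bounded_volatility_drift_class =
  fixes \<sigma> :: "real \<Rightarrow> real" and \<nu>lo \<nu>hi C A \<gamma> R :: real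
  assumes sigma_continuous: "continuous_on UNIV \<sigma>"
    and sigma_bounds: "\<And>x. \<nu>lo \<le> \<bar>\<sigma> x\<bar> \<and> \<bar>\<sigma> x\<bar> \<le> \<nu>hi"
    and nu_lo_pos: "0 < \<nu>lo" and gamma_pos: "0 < \<gamma>" and C_nonneg: "0 \<le> C"
    and A_nonneg: "0 \<le> A" and A_less_R: "A < R"
begin

definition drift_sup :: real where
  "drift_sup = 2 * C * (1 + R) / \<nu>lo\<^sup>2"

definition dens_lower :: real where
  "dens_lower = exp (- drift_sup * R) / \<nu>hi\<^sup>2"

definition dens_majorant :: "real \<Rightarrow> real" where
  "dens_majorant z = exp ((drift_sup + 2 * \<gamma>) * R) / \<nu>lo\<^sup>2 * exp (- (2 * \<gamma>) * \<bar>z\<bar>)"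

definition xi_integrand_lower :: real where
  "xi_integrand_lower = exp (- drift_sup * R) * dens_lower"

definition xi_integrand_upper :: real where
  "xi_integrand_upper = exp (drift_sup * R) * (LINT z|lborel. dens_majorant z)"

lemma sigma_sq_bounds: "\<nu>lo\<^sup>2 \<le> (\<sigma> x)\<^sup>2" "(\<sigma> x)\<^sup>2 \<le> \<nu>hi\<^sup>2"
  using sigma_bounds[of x] nu_lo_pos power_mono[of \<nu>lo "\<bar>\<sigma> x\<bar>" 2] power_mono[of "\<bar>\<sigma> x\<bar>" \<nu>hi 2]
  by auto

lemma sigma_sq_pos: "0 < (\<sigma> x)\<^sup>2"
  using sigma_sq_bounds(1)[of x] nu_lo_pos by (smt (verit) zero_less_power)

lemma sigma_nonzero: "\<sigma> x \<noteq> 0"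
  using sigma_sq_pos[of x] by auto

lemma drift_sup_nonneg: "0 \<le> drift_sup"
  using C_nonneg A_nonneg A_less_R by (simp add: drift_sup_def)

lemma nu_hi_pos: "0 < \<nu>hi"
  using sigma_bounds[of 0] nu_lo_pos by linarith

lemma dens_lower_pos: "0 < dens_lower"
  using nu_hi_pos by (simp add: dens_lower_def)

lemma xi_integrand_lower_pos: "0 < xi_integrand_lower"
  using dens_lower_pos by (simp add: xi_integrand_lower_def)

lemma xi_integrand_upper_nonneg: "0 \<le> xi_integrand_upper"
  by (simp add: xi_integrand_upper_def dens_majorant_def)

lemma drift_potential_has_derivative:
  assumes "b \<in> Sigma_class C A \<gamma> \<sigma>"
  shows "(drift_potential b \<sigma> has_real_derivative 2 * b t / (\<sigma> t)\<^sup>2) (at t)"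
proof -
  have "continuous_on UNIV b"
    using assms loc_lipschitz_imp_continuous_on by (auto simp: Sigma_class_def)
  then have "continuous_on UNIV (\<lambda>y. 2 * b y / (\<sigma> y)\<^sup>2)"
    using sigma_continuous sigma_nonzero by (intro continuous_intros) auto
  then show ?thesis
    unfolding drift_potential_def[abs_def] by (rule interval_integral_has_real_derivative)
qed

lemma continuous_on_drift_potential:
  assumes "b \<in> Sigma_class C A \<gamma> \<sigma>"
  shows "continuous_on S (drift_potential b \<sigma>)"
  using drift_potential_has_derivative[OF assms] by (blast intro: continuous_at_imp_continuous_on DERIV_isCont)

lemma drift_ratio_bound:
  assumes "b \<in> Sigma_class C A \<gamma> \<sigma>" "\<bar>t\<bar> \<le> R"
  shows "\<bar>2 * b t / (\<sigma> t)\<^sup>2\<bar> \<le> drift_sup"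
proof -
  have "\<bar>b t\<bar> \<le> C * (1 + \<bar>t\<bar>)" using assms(1) by (simp add: Sigma_class_def)
  also have "\<dots> \<le> C * (1 + R)" using assms(2) C_nonneg by (simp add: mult_left_mono)
  finally have "2 * \<bar>b t\<bar> / (\<sigma> t)\<^sup>2 \<le> 2 * (C * (1 + R)) / (\<sigma> t)\<^sup>2"
    using sigma_sq_pos[of t] by (simp add: divide_right_mono)
  also have "\<dots> \<le> 2 * (C * (1 + R)) / \<nu>lo\<^sup>2"
    using sigma_sq_bounds(1)[of t] sigma_sq_pos[of t] nu_lo_pos C_nonneg A_nonneg A_less_R
    by (intro divide_left_mono) auto
  finally show ?thesis by (simp add: drift_sup_def abs_mult)
qed

lemma drift_potential_abs_le:
  assumes "b \<in> Sigma_class C A \<gamma> \<sigma>" "\<bar>z\<bar> \<le> R"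
  shows "\<bar>drift_potential b \<sigma> z\<bar> \<le> drift_sup * R"
proof -
  have "\<bar>drift_potential b \<sigma> z\<bar> \<le> drift_sup * \<bar>z\<bar>"
    by (rule antiderivative_abs_le[OF drift_potential_has_derivative[OF assms(1)] _ _ assms(2)])
      (use drift_ratio_bound[OF assms(1)] in \<open>auto simp: drift_potential_def\<close>)
  also have "\<dots> \<le> drift_sup * R"
    using assms(2) drift_sup_nonneg by (simp add: mult_left_mono)
  finally show ?thesis .
qed

lemma drift_potential_le:
  assumes "b \<in> Sigma_class C A \<gamma> \<sigma>"
  shows "drift_potential b \<sigma> z \<le> (drift_sup + 2 * \<gamma>) * R - 2 * \<gamma> * \<bar>z\<bar>"
proof (rule antiderivative_linear_decay[OF drift_potential_has_derivative[OF assms]])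
  have inward: "b t / (\<sigma> t)\<^sup>2 * sgn t \<le> - \<gamma>" if "R \<le> \<bar>t\<bar>" for t
    using assms that A_less_R by (simp add: Sigma_class_def)
  show "2 * b t / (\<sigma> t)\<^sup>2 \<le> - (2 * \<gamma>)" if "R \<le> t" for t
    using inward[of t] that A_nonneg A_less_R by simp
  show "2 * \<gamma> \<le> 2 * b t / (\<sigma> t)\<^sup>2" if "t \<le> - R" for t
    using inward[of t] that A_nonneg A_less_R by simp
qed (use drift_ratio_bound[OF assms] A_nonneg A_less_R gamma_pos in \<open>auto simp: drift_potential_def\<close>)

lemma dens_un_le_majorant:
  assumes "b \<in> Sigma_class C A \<gamma> \<sigma>"
  shows "dens_un b \<sigma> z \<le> dens_majorant z"
proof -
  have "exp (drift_potential b \<sigma> z) \<le> exp ((drift_sup + 2 * \<gamma>) * R) * exp (- (2 * \<gamma>) * \<bar>z\<bar>)"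
    using drift_potential_le[OF assms, of z] by (simp add: mult_exp_exp)
  then have "exp (drift_potential b \<sigma> z) / (\<sigma> z)\<^sup>2
      \<le> exp ((drift_sup + 2 * \<gamma>) * R) * exp (- (2 * \<gamma>) * \<bar>z\<bar>) / (\<sigma> z)\<^sup>2"
    using sigma_sq_pos[of z] by (simp add: divide_right_mono)
  also have "\<dots> \<le> exp ((drift_sup + 2 * \<gamma>) * R) * exp (- (2 * \<gamma>) * \<bar>z\<bar>) / \<nu>lo\<^sup>2"
    using sigma_sq_bounds(1)[of z] sigma_sq_pos[of z] nu_lo_pos by (intro divide_left_mono) auto
  finally show ?thesis by (simp add: dens_un_eq_exp_drift_potential dens_majorant_def)
qed

lemma dens_un_ge_lower:
  assumes "b \<in> Sigma_class C A \<gamma> \<sigma>" "\<bar>z\<bar> \<le> R"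
  shows "dens_lower \<le> dens_un b \<sigma> z"
proof -
  have "exp (- drift_sup * R) / \<nu>hi\<^sup>2 \<le> exp (drift_potential b \<sigma> z) / \<nu>hi\<^sup>2"
    using drift_potential_abs_le[OF assms] by (simp add: divide_right_mono)
  also have "\<dots> \<le> exp (drift_potential b \<sigma> z) / (\<sigma> z)\<^sup>2"
    using sigma_sq_bounds(2)[of z] sigma_sq_pos[of z] nu_hi_pos by (intro divide_left_mono) auto
  finally show ?thesis by (simp add: dens_un_eq_exp_drift_potential dens_lower_def)
qed

lemma integrable_dens_majorant: "integrable lborel dens_majorant"
  unfolding dens_majorant_def[abs_def]
  using integrable_exp_neg_abs[of "2 * \<gamma>"] gamma_pos by simp

lemma integrable_dens_un:
  assumes "b \<in> Sigma_class C A \<gamma> \<sigma>"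
  shows "integrable lborel (dens_un b \<sigma>)"
proof (rule Bochner_Integration.integrable_bound[OF integrable_dens_majorant])
  have "continuous_on UNIV (\<lambda>z. exp (drift_potential b \<sigma> z) / (\<sigma> z)\<^sup>2)"
    using continuous_on_drift_potential[OF assms] sigma_continuous sigma_nonzero
    by (intro continuous_intros) auto
  then show "dens_un b \<sigma> \<in> borel_measurable lborel"
    unfolding dens_un_eq_exp_drift_potential[abs_def] by (simp add: borel_measurable_continuous_onI)
  show "AE z in lborel. norm (dens_un b \<sigma> z) \<le> norm (dens_majorant z)"
    using dens_un_le_majorant[OF assms] dens_un_nonneg
    by (intro AE_I2) (auto intro: order.trans[OF _ abs_ge_self])
qed

lemma norm_const_pos:
  assumes "b \<in> Sigma_class C A \<gamma> \<sigma>"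
  shows "0 < norm_const b \<sigma>"
proof -
  have "dens_lower * measure lborel {0..R} \<le> (LINT z:{0..R}|lborel. dens_un b \<sigma> z)"
    using dens_un_ge_lower[OF assms]
    by (intro set_integral_ge_const_mult_measure[OF integrable_dens_un[OF assms]])
      (auto simp: emeasure_lborel_Icc_eq)
  also have "\<dots> \<le> (LINT z:UNIV|lborel. dens_un b \<sigma> z)"
    by (intro set_integral_mono_set_nonneg[OF integrable_dens_un[OF assms] dens_un_nonneg]) auto
  finally show ?thesis
    using mult_pos_pos[OF dens_lower_pos, of R] A_nonneg A_less_R
    by (simp add: norm_const_def set_lebesgue_integral_def)
qed

lemma dens_un_cdf_mono:
  assumes "b \<in> Sigma_class C A \<gamma> \<sigma>"
  shows "mono (dens_un_cdf b \<sigma>)"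
  unfolding mono_def dens_un_cdf_def
  by (auto intro!: set_integral_mono_set_nonneg[OF integrable_dens_un[OF assms] dens_un_nonneg])

lemma dens_un_cdf_bounds:
  assumes "b \<in> Sigma_class C A \<gamma> \<sigma>" "\<bar>y\<bar> \<le> R"
  shows "dens_lower * (y + R) \<le> dens_un_cdf b \<sigma> y \<and> dens_un_cdf b \<sigma> y \<le> (LINT z|lborel. dens_majorant z)"
proof
  have "dens_lower * measure lborel {-R..<y} \<le> (LINT z:{-R..<y}|lborel. dens_un b \<sigma> z)"
    using dens_un_ge_lower[OF assms(1)] assms(2)
    by (intro set_integral_ge_const_mult_measure[OF integrable_dens_un[OF assms(1)]])
      (auto simp: abs_le_iff)
  also have "\<dots> \<le> dens_un_cdf b \<sigma> y"
    unfolding dens_un_cdf_def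
    by (intro set_integral_mono_set_nonneg[OF integrable_dens_un[OF assms(1)] dens_un_nonneg]) auto
  finally show "dens_lower * (y + R) \<le> dens_un_cdf b \<sigma> y"
    using assms(2) by simp
next
  have "dens_un_cdf b \<sigma> y \<le> (LINT z:UNIV|lborel. dens_un b \<sigma> z)"
    unfolding dens_un_cdf_def
    by (intro set_integral_mono_set_nonneg[OF integrable_dens_un[OF assms(1)] dens_un_nonneg]) auto
  also have "\<dots> \<le> (LINT z|lborel. dens_majorant z)"
    using integral_mono[OF integrable_dens_un[OF assms(1)] integrable_dens_majorant dens_un_le_majorant[OF assms(1)]]
    by (simp add: set_lebesgue_integral_def)
  finally show "dens_un_cdf b \<sigma> y \<le> (LINT z|lborel. dens_majorant z)" .
qed

lemma xi_integrand_bounds: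
  assumes "b \<in> Sigma_class C A \<gamma> \<sigma>" "\<bar>y\<bar> \<le> R" "1 \<le> y + R"
  shows "xi_integrand_lower \<le> exp (- drift_potential b \<sigma> y) * dens_un_cdf b \<sigma> y
    \<and> exp (- drift_potential b \<sigma> y) * dens_un_cdf b \<sigma> y \<le> xi_integrand_upper"
proof -
  have weight: "exp (- drift_sup * R) \<le> exp (- drift_potential b \<sigma> y)"
    "exp (- drift_potential b \<sigma> y) \<le> exp (drift_sup * R)"
    using drift_potential_abs_le[OF assms(1,2)] by auto
  have cdf: "dens_lower \<le> dens_un_cdf b \<sigma> y" "dens_un_cdf b \<sigma> y \<le> (LINT z|lborel. dens_majorant z)"
    using dens_un_cdf_bounds[OF assms(1,2)] dens_lower_pos assms(3)
    by (auto intro: order.trans[OF mult_left_mono[of 1 "y + R" dens_lower, simplified]])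
  show ?thesis
    using weight cdf dens_lower_pos
    by (auto simp: xi_integrand_lower_def xi_integrand_upper_def intro!: mult_mono)
qed

lemma xi_bounds:
  assumes "b \<in> Sigma_class C A \<gamma> \<sigma>" "y0 \<le> x" "1 - R \<le> y0" "x \<le> R"
  shows "2 * ((x - y0) * xi_integrand_lower) \<le> xi b \<sigma> y0 x
    \<and> xi b \<sigma> y0 x \<le> 2 * ((x - y0) * xi_integrand_upper)"
proof -
  have "continuous_on UNIV (\<lambda>y. exp (- drift_potential b \<sigma> y))"
    using continuous_on_drift_potential[OF assms(1)] by (intro continuous_intros)
  then have "(\<lambda>y. exp (- drift_potential b \<sigma> y)) \<in> borel_measurable lborel"
    using borel_measurable_continuous_onI by simp
  moreover have "dens_un_cdf b \<sigma> \<in> borel_measurable lborel"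
    using borel_measurable_mono[OF dens_un_cdf_mono[OF assms(1)]] by simp
  ultimately have "(\<lambda>y. exp (- drift_potential b \<sigma> y) * dens_un_cdf b \<sigma> y) \<in> borel_measurable lborel"
    by measurable
  then have "(x - y0) * xi_integrand_lower
        \<le> (LINT y:{y0..x}|lborel. exp (- drift_potential b \<sigma> y) * dens_un_cdf b \<sigma> y)
      \<and> (LINT y:{y0..x}|lborel. exp (- drift_potential b \<sigma> y) * dens_un_cdf b \<sigma> y)
        \<le> (x - y0) * xi_integrand_upper"
    by (rule set_integral_Icc_bounds[OF _ assms(2)])
      (use xi_integrand_bounds[OF assms(1)] assms(3,4) in \<open>auto simp: abs_le_iff\<close>)
  then show ?thesis
    unfolding xi_eq_weighted_dens_un_cdf[OF norm_const_pos[OF assms(1), THEN less_imp_neq, symmetric]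
        sigma_nonzero assms(2)]
    by linarith
qed

end

theorem lemma4p1:
  fixes \<sigma> :: "real \<Rightarrow> real" and \<nu>lo \<nu>hi C A \<gamma> y0 y1 ybar :: real
  assumes "loc_lipschitz \<sigma>"
    and "0 < \<nu>lo" and "\<nu>lo \<le> \<nu>hi"
    and "\<And>x. \<nu>lo \<le> \<bar>\<sigma> x\<bar> \<and> \<bar>\<sigma> x\<bar> \<le> \<nu>hi"
    and "A > 0" and "\<gamma> > 0" and "C \<ge> 1"
    and "y0 < y1" and "y1 < ybar"
  shows "\<exists>M1 M2. 0 < M1 \<and> M1 \<le> M2 \<and>
           (\<forall>b \<in> Sigma_class C A \<gamma> \<sigma>. \<forall>x \<in> {y1..ybar}. M1 \<le> xi b \<sigma> y0 x \<and> xi b \<sigma> y0 x \<le> M2)"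
proof -
  define R where "R = \<bar>y0\<bar> + \<bar>ybar\<bar> + A + 1"
  interpret bounded_volatility_drift_class \<sigma> \<nu>lo \<nu>hi C A \<gamma> R
    using assms loc_lipschitz_imp_continuous_on by unfold_locales (auto simp: R_def)
  define M1 where "M1 = 2 * ((y1 - y0) * xi_integrand_lower)"
  define M2 where "M2 = max M1 (2 * ((ybar - y0) * xi_integrand_upper))"
  have "M1 \<le> xi b \<sigma> y0 x \<and> xi b \<sigma> y0 x \<le> M2" if "b \<in> Sigma_class C A \<gamma> \<sigma>" "x \<in> {y1..ybar}" for b x
  proof -
    have "(y1 - y0) * xi_integrand_lower \<le> (x - y0) * xi_integrand_lower"
      "(x - y0) * xi_integrand_upper \<le> (ybar - y0) * xi_integrand_upper"
      using that(2) xi_integrand_lower_pos xi_integrand_upper_nonneg by (auto intro: mult_right_mono)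
    moreover have "1 - R \<le> y0" "x \<le> R"
      using that(2) \<open>A > 0\<close> by (auto simp: R_def)
    ultimately show ?thesis
      using xi_bounds[OF that(1), of y0 x] that(2) \<open>y0 < y1\<close> unfolding M1_def M2_def by auto
  qed
  moreover have "0 < M1"
    using xi_integrand_lower_pos \<open>y0 < y1\<close> by (simp add: M1_def)
  ultimately show ?thesis
    by (intro exI[of _ M1] exI[of _ M2]) (auto simp: M2_def)
qed

end
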